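(* Let $M=\mathbb{S}^1\times[-\rho,\rho]$ carry a metric of the form $ds^2=d\sigma^2+f(\theta,\sigma)^2d\theta^2$, with $\theta\in\mathbb{S}^1=[0,2\pi)$, $\sigma\in[-\rho,\rho]$ and $f>0$ smooth. Suppose there are constants $\alpha>0$ and $C\ge 0$ such that $R\ge-\alpha$ on $M$ and $|k_g|\le C$ on $\partial M$. For $s\in[-\rho,\rho]$ let $L_s=\int_0^{2\pi}f(\theta,s)\,d\theta$ be the length of the parallel $\mathbb{S}^1\times\{s\}$. Then for all $s,q\in[-\rho,\rho]$, $$L_s e^{-2\rho(\alpha\rho+C)}\le L_q\le L_s e^{2\rho(\alpha\rho+C)}.$$
   Context: $R$ is the scalar curvature (twice the Gauss curvature) of the metric and $k_g$ the geodesic curvature of the boundary curves $\mathbb{S}^1\times\{\pm\rho\}$. *)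

theory Defs
  imports "HOL-Analysis.Analysis"
begin

fun Ck_on :: "nat \<Rightarrow> (real \<times> real) set \<Rightarrow> (real \<times> real \<Rightarrow> real) \<Rightarrow> bool" where
  "Ck_on 0 U g = continuous_on U g"
| "Ck_on (Suc n) U g =
     (\<exists>g1 g2. (\<forall>x\<in>U. (g has_derivative (\<lambda>(h1, h2). g1 x * h1 + g2 x * h2)) (at x))
              \<and> Ck_on n U g1 \<and> Ck_on n U g2)"

definition smooth_on2 :: "(real \<times> real) set \<Rightarrow> (real \<times> real \<Rightarrow> real) \<Rightarrow> bool" where
  "smooth_on2 U g \<longleftrightarrow> open U \<and> (\<forall>n. Ck_on n U g)"

definition smooth_strip :: "real \<Rightarrow> (real \<Rightarrow> real \<Rightarrow> real) \<Rightarrow> bool" where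
  "smooth_strip \<rho> f \<longleftrightarrow>
     (\<exists>U. UNIV \<times> {-\<rho>..\<rho>} \<subseteq> U \<and> smooth_on2 U (\<lambda>(\<theta>, \<sigma>). f \<theta> \<sigma>))"

text \<open>Scalar curvature R = 2K of ds^2 = d sigma^2 + f^2 d theta^2, where K = - f_{sigma sigma} / f.\<close>
definition scalar_curv :: "(real \<Rightarrow> real \<Rightarrow> real) \<Rightarrow> real \<Rightarrow> real \<Rightarrow> real" where
  "scalar_curv f \<theta> \<sigma> = - 2 * deriv (\<lambda>t. deriv (\<lambda>u. f \<theta> u) t) \<sigma> / f \<theta> \<sigma>"

text \<open>Geodesic curvature of the parallel S^1 x {sigma} (up to the orientation sign,
  which is irrelevant for |k_g|): k_g = f_sigma / f.\<close>
definition geod_curv :: "(real \<Rightarrow> real \<Rightarrow> real) \<Rightarrow> real \<Rightarrow> real \<Rightarrow> real" where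
  "geod_curv f \<theta> \<sigma> = deriv (\<lambda>u. f \<theta> u) \<sigma> / f \<theta> \<sigma>"

definition parallel_length :: "(real \<Rightarrow> real \<Rightarrow> real) \<Rightarrow> real \<Rightarrow> real" where
  "parallel_length f s = integral {0..2*pi} (\<lambda>\<theta>. f \<theta> s)"

end

theory Submission imports Defs begin

text \<open>Along each meridian \<open>\<theta> = const\<close> the function \<open>F = f \<theta>\<close> satisfies
  \<open>F''/F = -R/2 \<le> \<alpha>/2\<close>, hence \<open>(ln F)'' = F''/F - (F'/F)\<^sup>2 \<le> \<alpha>/2\<close>. Since
  \<open>|(ln F)'| = |k\<^sub>g| \<le> C\<close> at both ends of \<open>[-\<rho>, \<rho>]\<close>, integrating \<open>(ln F)''\<close> from \<open>-\<rho>\<close>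
  (upper bound) and from \<open>\<rho>\<close> (lower bound) gives \<open>|(ln F)'| \<le> \<alpha>\<rho> + C\<close> everywhere, so
  \<open>|ln F q - ln F s| \<le> 2\<rho>(\<alpha>\<rho> + C)\<close>. This pointwise comparison of \<open>f \<theta> q\<close> with \<open>f \<theta> s\<close>
  integrates over \<open>\<theta>\<close> to the comparison of lengths.\<close>

lemma DERIV_le_imp_increment_le:
  fixes h h' :: "real \<Rightarrow> real"
  assumes "a \<le> b"
    and "\<And>x. x \<in> {a..b} \<Longrightarrow> (h has_real_derivative h' x) (at x)"
    and "\<And>x. x \<in> {a..b} \<Longrightarrow> h' x \<le> K"
  shows "h b - h a \<le> K * (b - a)"
proof -
  have "K * a - h a \<le> K * b - h b"
  proof (rule DERIV_nonneg_imp_nondecreasing[OF \<open>a \<le> b\<close>])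
    fix x assume "a \<le> x" "x \<le> b"
    then have "x \<in> {a..b}" by simp
    with assms(2,3) show "\<exists>y. ((\<lambda>x. K * x - h x) has_real_derivative y) (at x) \<and> y \<ge> 0"
      by (intro exI[of _ "K - h' x"]) (auto intro!: derivative_eq_intros)
  qed
  then show ?thesis by (simp add: algebra_simps)
qed

lemma bounded_by_ends_of_DERIV_le:
  fixes g g' :: "real \<Rightarrow> real"
  assumes "u \<in> {a..b}" "K \<ge> 0"
    and "\<And>x. x \<in> {a..b} \<Longrightarrow> (g has_real_derivative g' x) (at x)"
    and "\<And>x. x \<in> {a..b} \<Longrightarrow> g' x \<le> K"
    and "\<bar>g a\<bar> \<le> C" "\<bar>g b\<bar> \<le> C"
  shows "\<bar>g u\<bar> \<le> C + K * (b - a)"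
proof -
  have "g u - g a \<le> K * (u - a)" "g b - g u \<le> K * (b - u)"
    using assms(1) by (auto intro!: DERIV_le_imp_increment_le assms(3,4))
  moreover have "K * (u - a) \<le> K * (b - a)" "K * (b - u) \<le> K * (b - a)"
    using assms(1,2) by (auto intro!: mult_left_mono)
  ultimately show ?thesis
    using assms(5,6) by linarith
qed

lemma le_mult_exp_of_second_derivative_bound:
  fixes F F' F'' :: "real \<Rightarrow> real"
  assumes "K \<ge> 0"
    and F': "\<And>u. u \<in> {a..b} \<Longrightarrow> (F has_real_derivative F' u) (at u)"
    and F'': "\<And>u. u \<in> {a..b} \<Longrightarrow> (F' has_real_derivative F'' u) (at u)"
    and pos: "\<And>u. u \<in> {a..b} \<Longrightarrow> F u > 0"
    and F''_le: "\<And>u. u \<in> {a..b} \<Longrightarrow> F'' u / F u \<le> K"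
    and ends: "\<bar>F' a / F a\<bar> \<le> C" "\<bar>F' b / F b\<bar> \<le> C"
    and s: "s \<in> {a..b}" and q: "q \<in> {a..b}"
  shows "F q \<le> F s * exp ((b - a) * (K * (b - a) + C))"
proof -
  define M where "M = C + K * (b - a)"
  have ln_F: "((\<lambda>v. ln (F v)) has_real_derivative F' u / F u) (at u)" if "u \<in> {a..b}" for u
    using F'[OF that] pos[OF that] by (auto intro!: derivative_eq_intros simp: field_simps)
  define L' where "L' u = F'' u / F u - (F' u / F u)\<^sup>2" for u
  have log_deriv: "((\<lambda>v. F' v / F v) has_real_derivative L' u) (at u)" if "u \<in> {a..b}" for u
    using F'[OF that] F''[OF that] pos[OF that] unfolding L'_def
    by (auto intro!: derivative_eq_intros simp: field_simps power2_eq_square)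
  have "L' u \<le> K" if "u \<in> {a..b}" for u
    using F''_le[OF that] unfolding L'_def by (smt (verit) zero_le_power2)
  then have log_deriv_bounded: "\<bar>F' u / F u\<bar> \<le> M" if "u \<in> {a..b}" for u
    unfolding M_def using \<open>K \<ge> 0\<close> log_deriv ends that
    by (intro bounded_by_ends_of_DERIV_le[where g = "\<lambda>v. F' v / F v" and g' = L']) auto
  have ln_F_bounded: "F' u / F u \<le> M" "- (F' u / F u) \<le> M" if "u \<in> {a..b}" for u
    using log_deriv_bounded[OF that] by (simp_all only: abs_le_iff)
  have "M \<ge> 0"
    using log_deriv_bounded[OF s] by linarith
  have "ln (F q) - ln (F s) \<le> M * \<bar>q - s\<bar>"
  proof (cases "s \<le> q")
    case True
    have "ln (F q) - ln (F s) \<le> M * (q - s)"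
      using True s q
      by (intro DERIV_le_imp_increment_le[where h' = "\<lambda>u. F' u / F u"] ln_F ln_F_bounded) auto
    then show ?thesis using True by simp
  next
    case False
    have "- ln (F s) - - ln (F q) \<le> M * (s - q)"
      using False s q
      by (intro DERIV_le_imp_increment_le[where h' = "\<lambda>u. - (F' u / F u)"] ln_F_bounded)
        (auto intro!: DERIV_minus ln_F)
    then show ?thesis using False by simp
  qed
  also have "\<dots> \<le> M * (b - a)"
    using s q \<open>M \<ge> 0\<close> by (intro mult_left_mono) auto
  finally have "F q \<le> exp (ln (F s) + M * (b - a))"
    using pos[OF q] by (metis add.commute diff_le_eq exp_le_cancel_iff exp_ln)
  also have "\<dots> = F s * exp ((b - a) * (K * (b - a) + C))"
    using pos[OF s] by (simp add: exp_add M_def mult.commute add.commute)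
  finally show ?thesis .
qed

lemma has_real_derivative_partial_snd:
  assumes "(G has_derivative (\<lambda>(h1, h2). a * h1 + b * h2)) (at (t, u))"
  shows "((\<lambda>v. G (t, v)) has_real_derivative b) (at u)"
proof -
  have "((\<lambda>v. (t, v)) has_derivative (\<lambda>h. (0, h))) (at u)"
    by (auto intro!: derivative_eq_intros)
  from has_derivative_compose[OF this assms]
  show ?thesis
    unfolding has_field_derivative_def by (rule has_derivative_eq_rhs) (auto simp: fun_eq_iff)
qed

lemma smooth_strip_section_deriv:
  assumes "smooth_strip \<rho> f" and \<sigma>: "\<sigma> \<in> {-\<rho>..\<rho>}"
  shows "(f \<theta> has_real_derivative deriv (f \<theta>) \<sigma>) (at \<sigma>)"
    and "(deriv (f \<theta>) has_real_derivative deriv (deriv (f \<theta>)) \<sigma>) (at \<sigma>)"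
proof -
  obtain U where strip: "UNIV \<times> {-\<rho>..\<rho>} \<subseteq> U" and "open U"
    and smooth: "\<And>n. Ck_on n U (\<lambda>(\<theta>, \<sigma>). f \<theta> \<sigma>)"
    using assms(1) unfolding smooth_strip_def smooth_on2_def by blast
  from smooth[of 2] obtain g1 g2 g21 g22 where
    dF: "\<forall>x\<in>U. ((\<lambda>(\<theta>, \<sigma>). f \<theta> \<sigma>) has_derivative (\<lambda>(h1, h2). g1 x * h1 + g2 x * h2)) (at x)"
    and dg2: "\<forall>x\<in>U. (g2 has_derivative (\<lambda>(h1, h2). g21 x * h1 + g22 x * h2)) (at x)"
    by (auto simp: numeral_2_eq_2)
  define V where "V = (\<lambda>v. (\<theta>, v)) -` U"
  have "open V"
    unfolding V_def by (rule open_vimage[OF \<open>open U\<close>]) (auto intro!: continuous_intros)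
  have "\<sigma> \<in> V"
    using strip \<sigma> unfolding V_def by auto
  have D1: "(f \<theta> has_real_derivative g2 (\<theta>, u)) (at u)" if "u \<in> V" for u
    using has_real_derivative_partial_snd[of "\<lambda>(\<theta>, \<sigma>). f \<theta> \<sigma>" "g1 (\<theta>, u)" "g2 (\<theta>, u)" \<theta> u] dF that
    unfolding V_def by auto
  have D2: "((\<lambda>v. g2 (\<theta>, v)) has_real_derivative g22 (\<theta>, \<sigma>)) (at \<sigma>)"
    using has_real_derivative_partial_snd[of g2 "g21 (\<theta>, \<sigma>)" "g22 (\<theta>, \<sigma>)" \<theta> \<sigma>] dg2 \<open>\<sigma> \<in> V\<close>
    unfolding V_def by auto
  have deriv_eq: "deriv (f \<theta>) u = g2 (\<theta>, u)" if "u \<in> V" for u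
    using D1[OF that] by (rule DERIV_imp_deriv)
  show "(f \<theta> has_real_derivative deriv (f \<theta>) \<sigma>) (at \<sigma>)"
    using D1[OF \<open>\<sigma> \<in> V\<close>] by (simp add: deriv_eq \<open>\<sigma> \<in> V\<close>)
  have "(deriv (f \<theta>) has_real_derivative g22 (\<theta>, \<sigma>)) (at \<sigma>)"
    by (rule has_field_derivative_transform_within_open[OF D2 \<open>open V\<close> \<open>\<sigma> \<in> V\<close>])
      (simp add: deriv_eq)
  then show "(deriv (f \<theta>) has_real_derivative deriv (deriv (f \<theta>)) \<sigma>) (at \<sigma>)"
    by (simp add: DERIV_imp_deriv)
qed

lemma smooth_strip_continuous_on_parallel:
  assumes "smooth_strip \<rho> f" "\<sigma> \<in> {-\<rho>..\<rho>}"
  shows "continuous_on A (\<lambda>\<theta>. f \<theta> \<sigma>)"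
proof -
  obtain U where strip: "UNIV \<times> {-\<rho>..\<rho>} \<subseteq> U"
    and smooth: "\<And>n. Ck_on n U (\<lambda>(\<theta>, \<sigma>). f \<theta> \<sigma>)"
    using assms(1) unfolding smooth_strip_def smooth_on2_def by blast
  have "continuous_on U (\<lambda>(\<theta>, \<sigma>). f \<theta> \<sigma>)"
    using smooth[of 0] by simp
  moreover have "continuous_on A (\<lambda>\<theta>. (\<theta>, \<sigma>))"
    by (intro continuous_intros)
  moreover have "(\<lambda>\<theta>. (\<theta>, \<sigma>)) ` A \<subseteq> U"
    using strip assms(2) by auto
  ultimately show ?thesis
    using continuous_on_compose2 by fastforce
qed

theorem lemma2p2:
  fixes f :: "real \<Rightarrow> real \<Rightarrow> real" and \<rho> \<alpha> C :: real
  assumes rho_pos: "\<rho> > 0"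
    and smooth: "smooth_strip \<rho> f"
    and periodic: "\<And>\<theta> \<sigma>. \<sigma> \<in> {-\<rho>..\<rho>} \<Longrightarrow> f (\<theta> + 2*pi) \<sigma> = f \<theta> \<sigma>"
    and pos: "\<And>\<theta> \<sigma>. \<sigma> \<in> {-\<rho>..\<rho>} \<Longrightarrow> f \<theta> \<sigma> > 0"
    and alpha_pos: "\<alpha> > 0" and C_nonneg: "C \<ge> 0"
    and curv: "\<And>\<theta> \<sigma>. \<sigma> \<in> {-\<rho>..\<rho>} \<Longrightarrow> scalar_curv f \<theta> \<sigma> \<ge> - \<alpha>"
    and bdry: "\<And>\<theta>. \<bar>geod_curv f \<theta> \<rho>\<bar> \<le> C" "\<And>\<theta>. \<bar>geod_curv f \<theta> (-\<rho>)\<bar> \<le> C"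
  shows "\<forall>s\<in>{-\<rho>..\<rho>}. \<forall>q\<in>{-\<rho>..\<rho>}.
           parallel_length f s * exp (- 2 * \<rho> * (\<alpha> * \<rho> + C)) \<le> parallel_length f q
         \<and> parallel_length f q \<le> parallel_length f s * exp (2 * \<rho> * (\<alpha> * \<rho> + C))"
proof -
  define E where "E = exp (2 * \<rho> * (\<alpha> * \<rho> + C))"
  have pointwise: "f \<theta> q \<le> f \<theta> s * E" if "s \<in> {-\<rho>..\<rho>}" "q \<in> {-\<rho>..\<rho>}" for \<theta> s q
  proof -
    have "f \<theta> q \<le> f \<theta> s * exp ((\<rho> - - \<rho>) * (\<alpha> / 2 * (\<rho> - - \<rho>) + C))"
    proof (rule le_mult_exp_of_second_derivative_bound[where F = "f \<theta>" and F' = "deriv (f \<theta>)"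
          and F'' = "deriv (deriv (f \<theta>))"])
      show "deriv (deriv (f \<theta>)) u / f \<theta> u \<le> \<alpha> / 2" if "u \<in> {-\<rho>..\<rho>}" for u
        using curv[OF that, of \<theta>] pos[OF that, of \<theta>] by (simp add: scalar_curv_def field_simps)
    qed (use that alpha_pos bdry pos smooth_strip_section_deriv[OF smooth] in
      \<open>auto simp: geod_curv_def\<close>)
    then show ?thesis by (simp add: E_def algebra_simps)
  qed
  have length_le: "parallel_length f q \<le> parallel_length f s * E"
    if "s \<in> {-\<rho>..\<rho>}" "q \<in> {-\<rho>..\<rho>}" for s q
    unfolding parallel_length_def using that pointwise
    by (subst integral_mult_left[symmetric], intro integral_le)
      (auto intro!: integrable_continuous_interval continuous_intros
        smooth_strip_continuous_on_parallel[OF smooth])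
  show ?thesis
  proof (intro ballI conjI)
    fix s q assume "s \<in> {-\<rho>..\<rho>}" "q \<in> {-\<rho>..\<rho>}"
    show "parallel_length f q \<le> parallel_length f s * exp (2 * \<rho> * (\<alpha> * \<rho> + C))"
      using length_le[OF \<open>s \<in> _\<close> \<open>q \<in> _\<close>] by (simp add: E_def)
    have "parallel_length f s * inverse E \<le> parallel_length f q"
      using length_le[OF \<open>q \<in> _\<close> \<open>s \<in> _\<close>] by (simp add: E_def field_simps)
    then show "parallel_length f s * exp (- 2 * \<rho> * (\<alpha> * \<rho> + C)) \<le> parallel_length f q"
      by (simp add: E_def flip: exp_minus)
  qed
qed

end
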